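(* If $G$ is a graph that contains no induced subgraph isomorphic to $C_5$ and no induced subgraph isomorphic to the bull, and $G$ contains an anchor, then $G$ contains a homogeneous set.
   Context: All graphs are finite and simple. The bull is the graph consisting of a triangle with two disjoint pendant edges. For disjoint $A,B\subseteq V(G)$, $A$ is complete (anticomplete) to $B$ if every vertex of $A$ is adjacent (non-adjacent) to every vertex of $B$. A set $X\subseteq V(G)$ is a homogeneous set if $1<|X|<|V(G)|$ and every vertex of $V(G)\setminus X$ is either complete or anticomplete to $X$. An anchor is a six-vertex graph consisting of a 4-vertex induced path $P$, a vertex $c$ complete to $V(P)$, and a vertex $a$ anticomplete to $V(P)$ (with $a,c$ either adjacent or not). $G$ contains an anchor if some induced subgraph of $G$ is isomorphic to an anchor. *)

theory Defs
  imports Main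
begin

definition simple_graph :: "'a set \<Rightarrow> ('a \<Rightarrow> 'a \<Rightarrow> bool) \<Rightarrow> bool" where
  "simple_graph V E \<longleftrightarrow> finite V \<and> (\<forall>x\<in>V. \<forall>y\<in>V. E x y \<longleftrightarrow> E y x) \<and> (\<forall>x\<in>V. \<not> E x x)"

definition contains_induced :: "'a set \<Rightarrow> ('a \<Rightarrow> 'a \<Rightarrow> bool) \<Rightarrow> 'b set \<Rightarrow> ('b \<Rightarrow> 'b \<Rightarrow> bool) \<Rightarrow> bool" where
  "contains_induced V E W F \<longleftrightarrow>
     (\<exists>f. inj_on f W \<and> f ` W \<subseteq> V \<and> (\<forall>x\<in>W. \<forall>y\<in>W. E (f x) (f y) \<longleftrightarrow> F x y))"

definition C5_adj :: "nat \<Rightarrow> nat \<Rightarrow> bool" where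
  "C5_adj i j \<longleftrightarrow> (j = (i + 1) mod 5 \<or> i = (j + 1) mod 5)"

definition bull_adj :: "nat \<Rightarrow> nat \<Rightarrow> bool" where
  "bull_adj i j \<longleftrightarrow> {i, j} \<in> {{0,1},{1,2},{0,2},{0,3},{1,4}}"

text \<open>Anchor: induced path 0-1-2-3, vertex c = 4 complete to the path, vertex a = 5
  anticomplete to the path; a and c adjacent iff ac.\<close>
definition anchor_adj :: "bool \<Rightarrow> nat \<Rightarrow> nat \<Rightarrow> bool" where
  "anchor_adj ac i j \<longleftrightarrow>
     {i, j} \<in> {{0,1},{1,2},{2,3},{4,0},{4,1},{4,2},{4,3}} \<or> (ac \<and> {i, j} = {4,5})"

definition contains_anchor :: "'a set \<Rightarrow> ('a \<Rightarrow> 'a \<Rightarrow> bool) \<Rightarrow> bool" where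
  "contains_anchor V E \<longleftrightarrow> (\<exists>ac. contains_induced V E {0..5::nat} (anchor_adj ac))"

definition homogeneous_set :: "'a set \<Rightarrow> ('a \<Rightarrow> 'a \<Rightarrow> bool) \<Rightarrow> 'a set \<Rightarrow> bool" where
  "homogeneous_set V E X \<longleftrightarrow> X \<subseteq> V \<and> 1 < card X \<and> card X < card V \<and>
     (\<forall>v\<in>V - X. (\<forall>x\<in>X. E v x) \<or> (\<forall>x\<in>X. \<not> E v x))"

end

theory Submission
  imports Defs
begin

text \<open>Let \<open>P\<close> be the induced path \<open>p0-p1-p2-p3\<close> of the anchor.  Call a vertex complete to \<open>P\<close>
  a center and one anticomplete to \<open>P\<close> an anticenter; a center is good if it has an anticenter
  neighbour, an anticenter is good if it has a center non-neighbour, and the anchor provides a good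
  center or a good anticenter.  Grow \<open>P\<close> by repeatedly adding a vertex that is mixed on the current
  set.  Bull- and C5-freeness show that the set stays connected and anticonnected, that good centers
  stay complete and good anticenters anticomplete to it, and that no vertex non-adjacent to a good
  center or adjacent to a good anticenter ever becomes mixed on it.  So the growth never reaches the
  good center or anticenter of the anchor, and the final set, on which no vertex is mixed, is a
  homogeneous set.  The anticenter half of the key case analysis is the center half in the
  complement graph, the bull, the 5-cycle and the 4-vertex path being self-complementary.\<close>

lemma contains_induced_complement:
  assumes "\<forall>x\<in>V. \<not> E x x" and "contains_induced V (\<lambda>x y. x \<noteq> y \<and> \<not> E x y) W F"
  shows "contains_induced V E W (\<lambda>x y. x \<noteq> y \<and> \<not> F x y)"
proof -
  obtain f where f: "inj_on f W" "f ` W \<subseteq> V" "\<forall>x\<in>W. \<forall>y\<in>W. (f x \<noteq> f y \<and> \<not> E (f x) (f y)) \<longleftrightarrow> F x y"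
    using assms(2) unfolding contains_induced_def by blast
  have "\<forall>x\<in>W. \<forall>y\<in>W. E (f x) (f y) \<longleftrightarrow> x \<noteq> y \<and> \<not> F x y"
    using f assms(1) by (metis image_subset_iff inj_on_contraD)
  with f show ?thesis unfolding contains_induced_def by blast
qed

lemma contains_induced_compose:
  assumes "contains_induced V E W F" and "inj_on \<sigma> W'" "\<sigma> ` W' \<subseteq> W"
    and "\<forall>x\<in>W'. \<forall>y\<in>W'. F (\<sigma> x) (\<sigma> y) \<longleftrightarrow> F' x y"
  shows "contains_induced V E W' F'"
proof -
  obtain f where f: "inj_on f W" "f ` W \<subseteq> V" "\<forall>x\<in>W. \<forall>y\<in>W. E (f x) (f y) \<longleftrightarrow> F x y"
    using assms(1) unfolding contains_induced_def by blast
  have "inj_on (f \<circ> \<sigma>) W'"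
    using f(1) assms(2,3) by (simp add: comp_inj_on inj_on_subset)
  moreover have "(f \<circ> \<sigma>) ` W' \<subseteq> V"
    using f(2) assms(3) by auto
  moreover have "\<forall>x\<in>W'. \<forall>y\<in>W'. E ((f \<circ> \<sigma>) x) ((f \<circ> \<sigma>) y) \<longleftrightarrow> F' x y"
    using f(3) assms(3,4) by (simp add: image_subset_iff)
  ultimately show ?thesis unfolding contains_induced_def by blast
qed

lemma contains_induced_if_twin_free:
  assumes "f ` W \<subseteq> V"
    and "\<forall>x\<in>W. \<forall>y\<in>W. E (f x) (f y) \<longleftrightarrow> F x y"
    and "\<forall>x\<in>W. \<forall>y\<in>W. x \<noteq> y \<longrightarrow> (\<exists>z\<in>W. F x z \<noteq> F y z)"
  shows "contains_induced V E W F"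
proof -
  have "inj_on f W"
  proof (rule inj_onI)
    fix x y assume "x \<in> W" "y \<in> W" "f x = f y"
    then have "\<forall>z\<in>W. F x z = F y z" using assms(2) by metis
    then show "x = y" using assms(3) \<open>x \<in> W\<close> \<open>y \<in> W\<close> by blast
  qed
  then show ?thesis unfolding contains_induced_def using assms(1,2) by blast
qed

lemma atLeast0_4_nat: "{0..4::nat} = {0, 1, 2, 3, 4}"
  by auto

locale bull_C5_free_graph =
  fixes V :: "'a set" and E :: "'a \<Rightarrow> 'a \<Rightarrow> bool"
  assumes simple: "simple_graph V E"
    and no_induced_C5: "\<not> contains_induced V E {0..4::nat} C5_adj"
    and no_induced_bull: "\<not> contains_induced V E {0..4::nat} bull_adj"
begin

lemma adj_sym: "x \<in> V \<Longrightarrow> y \<in> V \<Longrightarrow> E x y \<longleftrightarrow> E y x"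
  using simple unfolding simple_graph_def by blast

lemma not_adj_self: "x \<in> V \<Longrightarrow> \<not> E x x"
  using simple unfolding simple_graph_def by blast

lemma no_bull:
  assumes "x0 \<in> V" "x1 \<in> V" "x2 \<in> V" "x3 \<in> V" "x4 \<in> V"
    and bull: "E x0 x1" "E x1 x2" "E x0 x2" "E x0 x3" "E x1 x4"
      "\<not> E x0 x4" "\<not> E x1 x3" "\<not> E x2 x3" "\<not> E x2 x4" "\<not> E x3 x4"
  shows False
proof -
  let ?f = "nth [x0, x1, x2, x3, x4]"
  have "contains_induced V E {0..4::nat} bull_adj"
  proof (rule contains_induced_if_twin_free[where f = ?f])
    show "?f ` {0..4} \<subseteq> V" using assms by (auto simp: atLeast0_4_nat)
    show "\<forall>x\<in>{0..4}. \<forall>y\<in>{0..4}. E (?f x) (?f y) \<longleftrightarrow> bull_adj x y"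
      using bull assms by (auto simp: atLeast0_4_nat bull_adj_def doubleton_eq_iff adj_sym not_adj_self)
    show "\<forall>x\<in>{0..4::nat}. \<forall>y\<in>{0..4}. x \<noteq> y \<longrightarrow> (\<exists>z\<in>{0..4}. bull_adj x z \<noteq> bull_adj y z)"
      by (auto simp: atLeast0_4_nat bull_adj_def doubleton_eq_iff)
  qed
  then show False using no_induced_bull by blast
qed

lemma no_C5:
  assumes "x0 \<in> V" "x1 \<in> V" "x2 \<in> V" "x3 \<in> V" "x4 \<in> V"
    and C5: "E x0 x1" "E x1 x2" "E x2 x3" "E x3 x4" "E x4 x0"
      "\<not> E x0 x2" "\<not> E x0 x3" "\<not> E x1 x3" "\<not> E x1 x4" "\<not> E x2 x4"
  shows False
proof -
  let ?f = "nth [x0, x1, x2, x3, x4]"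
  have "contains_induced V E {0..4::nat} C5_adj"
  proof (rule contains_induced_if_twin_free[where f = ?f])
    show "?f ` {0..4} \<subseteq> V" using assms by (auto simp: atLeast0_4_nat)
    show "\<forall>x\<in>{0..4}. \<forall>y\<in>{0..4}. E (?f x) (?f y) \<longleftrightarrow> C5_adj x y"
      using C5 assms by (auto simp: atLeast0_4_nat C5_adj_def adj_sym not_adj_self)
    show "\<forall>x\<in>{0..4::nat}. \<forall>y\<in>{0..4}. x \<noteq> y \<longrightarrow> (\<exists>z\<in>{0..4}. C5_adj x z \<noteq> C5_adj y z)"
      by (auto simp: atLeast0_4_nat C5_adj_def)
  qed
  then show False using no_induced_C5 by blast
qed

text \<open>The bull and the 5-cycle are self-complementary; the maps below are isomorphisms onto
  their complements.\<close>

lemma complement_bull_C5_free: "bull_C5_free_graph V (\<lambda>x y. x \<noteq> y \<and> \<not> E x y)"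
proof
  show "simple_graph V (\<lambda>x y. x \<noteq> y \<and> \<not> E x y)"
    using simple unfolding simple_graph_def by auto
  have irrefl: "\<forall>x\<in>V. \<not> E x x" using not_adj_self by blast
  show "\<not> contains_induced V (\<lambda>x y. x \<noteq> y \<and> \<not> E x y) {0..4::nat} C5_adj"
  proof
    assume "contains_induced V (\<lambda>x y. x \<noteq> y \<and> \<not> E x y) {0..4::nat} C5_adj"
    with irrefl have "contains_induced V E {0..4::nat} (\<lambda>x y. x \<noteq> y \<and> \<not> C5_adj x y)"
      by (rule contains_induced_complement)
    then have "contains_induced V E {0..4::nat} C5_adj"
      by (rule contains_induced_compose[where \<sigma> = "\<lambda>i. 2 * i mod 5"])
        (auto simp: atLeast0_4_nat C5_adj_def inj_on_def)
    with no_induced_C5 show False ..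
  qed
  show "\<not> contains_induced V (\<lambda>x y. x \<noteq> y \<and> \<not> E x y) {0..4::nat} bull_adj"
  proof
    assume "contains_induced V (\<lambda>x y. x \<noteq> y \<and> \<not> E x y) {0..4::nat} bull_adj"
    with irrefl have "contains_induced V E {0..4::nat} (\<lambda>x y. x \<noteq> y \<and> \<not> bull_adj x y)"
      by (rule contains_induced_complement)
    then have "contains_induced V E {0..4::nat} bull_adj"
      by (rule contains_induced_compose[where \<sigma> = "nth [4, 3, 2, 0, 1]"])
        (auto simp: atLeast0_4_nat bull_adj_def doubleton_eq_iff inj_on_def)
    with no_induced_bull show False ..
  qed
qed

end

definition mixed :: "('a \<Rightarrow> 'a \<Rightarrow> bool) \<Rightarrow> 'a set \<Rightarrow> 'a \<Rightarrow> bool" where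
  "mixed E S u \<longleftrightarrow> (\<exists>x\<in>S. E u x) \<and> (\<exists>y\<in>S. \<not> E u y)"

definition connected_set :: "('a \<Rightarrow> 'a \<Rightarrow> bool) \<Rightarrow> 'a set \<Rightarrow> bool" where
  "connected_set R S \<longleftrightarrow> (\<forall>X\<subseteq>S. X \<noteq> {} \<longrightarrow> X \<noteq> S \<longrightarrow> (\<exists>x\<in>X. \<exists>y\<in>S - X. R x y))"

lemma connected_set_crossing:
  assumes "connected_set R S" "x \<in> S" "y \<in> S" "Q x" "\<not> Q y"
  obtains x' y' where "x' \<in> S" "y' \<in> S" "Q x'" "\<not> Q y'" "R x' y'"
proof -
  have "{z\<in>S. Q z} \<subseteq> S" "{z\<in>S. Q z} \<noteq> {}" "{z\<in>S. Q z} \<noteq> S"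
    using assms(2-5) by auto
  from assms(1)[unfolded connected_set_def, rule_format, OF this] that
  show ?thesis by auto
qed

lemma connected_set_insert:
  assumes "connected_set R S" "w \<notin> S" "x \<in> S" "R w x" "R x w"
  shows "connected_set R (insert w S)"
  unfolding connected_set_def
proof (intro allI impI)
  fix X assume X: "X \<subseteq> insert w S" "X \<noteq> {}" "X \<noteq> insert w S"
  show "\<exists>x\<in>X. \<exists>y\<in>insert w S - X. R x y"
  proof (cases "w \<in> X")
    case True
    show ?thesis
    proof (cases "X = {w}")
      case True
      then show ?thesis using assms(2-4) by auto
    next
      case False
      then have "X - {w} \<subseteq> S" "X - {w} \<noteq> {}" "X - {w} \<noteq> S"
        using X \<open>w \<in> X\<close> by auto
      from assms(1)[unfolded connected_set_def, rule_format, OF this]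
      show ?thesis using \<open>w \<in> X\<close> assms(2) by auto
    qed
  next
    case False
    show ?thesis
    proof (cases "X = S")
      case True
      then show ?thesis using False assms(3,5) by auto
    next
      case False
      then have "X \<subseteq> S" using X \<open>w \<notin> X\<close> by auto
      from assms(1)[unfolded connected_set_def, rule_format, OF this X(2) False]
      show ?thesis by auto
    qed
  qed
qed

locale anchored_path = bull_C5_free_graph +
  fixes p0 p1 p2 p3 :: 'a
  assumes path_in_V: "p0 \<in> V" "p1 \<in> V" "p2 \<in> V" "p3 \<in> V"
    and path: "E p0 p1" "E p1 p2" "E p2 p3" "\<not> E p0 p2" "\<not> E p0 p3" "\<not> E p1 p3"
begin

abbreviation P :: "'a set" where "P \<equiv> {p0, p1, p2, p3}"

definition center :: "'a \<Rightarrow> bool" where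
  "center x \<longleftrightarrow> x \<in> V \<and> (\<forall>p\<in>P. E x p)"

definition anticenter :: "'a \<Rightarrow> bool" where
  "anticenter x \<longleftrightarrow> x \<in> V \<and> (\<forall>p\<in>P. \<not> E x p)"

lemma path_rev: "E p1 p0" "E p2 p1" "E p3 p2" "\<not> E p2 p0" "\<not> E p3 p0" "\<not> E p3 p1"
  using path path_in_V adj_sym by auto

lemma anticenter_not_in_path: "anticenter x \<Longrightarrow> x \<notin> P"
  using path path_rev unfolding anticenter_def by auto

lemma P_connected: "connected_set E P"
  unfolding connected_set_def
proof (intro allI impI)
  fix X assume X: "X \<subseteq> P" "X \<noteq> {}" "X \<noteq> P"
  show "\<exists>x\<in>X. \<exists>y\<in>P - X. E x y"
  proof (rule ccontr)
    assume "\<not> ?thesis"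
    then have "p0 \<in> X \<longleftrightarrow> p1 \<in> X" "p1 \<in> X \<longleftrightarrow> p2 \<in> X" "p2 \<in> X \<longleftrightarrow> p3 \<in> X"
      using path path_rev by blast+
    then show False using X by blast
  qed
qed

lemma P_anticonnected: "connected_set (\<lambda>x y. \<not> E x y) P"
  unfolding connected_set_def
proof (intro allI impI)
  fix X assume X: "X \<subseteq> P" "X \<noteq> {}" "X \<noteq> P"
  show "\<exists>x\<in>X. \<exists>y\<in>P - X. \<not> E x y"
  proof (rule ccontr)
    assume "\<not> ?thesis"
    then have "p2 \<in> X \<longleftrightarrow> p0 \<in> X" "p0 \<in> X \<longleftrightarrow> p3 \<in> X" "p3 \<in> X \<longleftrightarrow> p1 \<in> X"
      using path path_rev by blast+
    then show False using X by blast
  qed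
qed

lemma not_mixed_if_nonadjacent_to_good_center:
  assumes c: "center c" and a: "anticenter a" "E c a" and u: "u \<in> V" "\<not> E u c"
  shows "\<not> mixed E P u"
proof
  assume mixed: "mixed E P u"
  have V: "c \<in> V" "a \<in> V" using a c unfolding center_def anticenter_def by auto
  have P: "x \<in> V" "E c x" "\<not> E a x" if "x \<in> P" for x
    using that path_in_V a c unfolding center_def anticenter_def by auto
  show False
  proof (cases "E u a")
    case False
    txt \<open>Some edge \<open>x y\<close> of \<open>P\<close> is crossed by \<open>u\<close>; triangle \<open>x c y\<close>, pendants \<open>u\<close> at \<open>x\<close>, \<open>a\<close> at \<open>c\<close>.\<close>
    obtain x0 y0 where "x0 \<in> P" "y0 \<in> P" "E u x0" "\<not> E u y0"
      using mixed unfolding mixed_def by blast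
    then obtain x y where xy: "x \<in> P" "y \<in> P" "E u x" "\<not> E u y" "E x y"
      by (rule connected_set_crossing[OF P_connected])
    show False
      using no_bull[of x c y u a] xy(3-) P[OF xy(1)] P[OF xy(2)] V u a False
      by (simp add: adj_sym)
  next
    case True
    txt \<open>Bull with triangle \<open>x c y\<close> and pendants \<open>u\<close> at \<open>x\<close>, \<open>z\<close> at \<open>c\<close>:\<close>
    have A: False if "x \<in> P" "y \<in> P" "z \<in> P" "E x y" "\<not> E x z" "\<not> E y z"
        "E u x" "\<not> E u y" "\<not> E u z" for x y z
      using no_bull[of x c y u z] that(4-) P[OF that(1)] P[OF that(2)] P[OF that(3)] V u
      by (simp add: adj_sym)
    txt \<open>Bull with triangle \<open>x y u\<close> and pendants \<open>z\<close> at \<open>y\<close>, \<open>a\<close> at \<open>u\<close>:\<close>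
    have B: False if "x \<in> P" "y \<in> P" "z \<in> P" "E x y" "E y z" "\<not> E x z"
        "E u x" "E u y" "\<not> E u z" for x y z
      using no_bull[of y u x z a] that(4-) P[OF that(1)] P[OF that(2)] P[OF that(3)] V u True
      by (simp add: adj_sym)
    have C: False if "E u p0" "\<not> E u p1" "\<not> E u p2" "E u p3"
      using no_C5[of p0 p1 p2 p3 u] that path path_in_V u by (simp add: adj_sym)
    txt \<open>Each of the 14 ways \<open>u\<close> can be mixed on \<open>P\<close> is excluded by one of these:\<close>
    show False
      using A[of p0 p1 p3] A[of p1 p0 p3] A[of p2 p3 p0] A[of p3 p2 p0]
        B[of p0 p1 p2] B[of p2 p1 p0] B[of p3 p2 p1] B[of p1 p2 p3] C
        mixed path path_rev unfolding mixed_def by blast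
  qed
qed

lemma complement_anchored_path: "anchored_path V (\<lambda>x y. x \<noteq> y \<and> \<not> E x y) p2 p0 p3 p1"
proof -
  interpret complement: bull_C5_free_graph V "\<lambda>x y. x \<noteq> y \<and> \<not> E x y"
    by (rule complement_bull_C5_free)
  have "p0 \<noteq> p2" "p0 \<noteq> p3" "p1 \<noteq> p3"
    using path path_rev by auto
  then show ?thesis
    by unfold_locales (use path path_rev path_in_V in auto)
qed

lemma not_mixed_if_adjacent_to_good_anticenter:
  assumes c: "center c" and a: "anticenter a" "\<not> E c a" and u: "u \<in> V" "E u a"
  shows "\<not> mixed E P u"
proof
  assume mixed: "mixed E P u"
  txt \<open>In the complement the path becomes \<open>p2-p0-p3-p1\<close> and \<open>c\<close>, \<open>a\<close> swap roles.\<close>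
  interpret complement: anchored_path V "\<lambda>x y. x \<noteq> y \<and> \<not> E x y" p2 p0 p3 p1
    by (rule complement_anchored_path)
  have P_eq: "{p2, p0, p3, p1} = P" by auto
  have "complement.center a" "complement.anticenter c"
    using c a anticenter_not_in_path[OF a(1)]
    unfolding complement.center_def complement.anticenter_def P_eq center_def anticenter_def
    by auto
  moreover have "a \<noteq> c \<and> \<not> E a c"
    using c a adj_sym unfolding center_def anticenter_def by auto
  ultimately have "\<not> mixed (\<lambda>x y. x \<noteq> y \<and> \<not> E x y) P u"
    using complement.not_mixed_if_nonadjacent_to_good_center[of a c u] a(2) u
    unfolding P_eq by auto
  moreover have "mixed (\<lambda>x y. x \<noteq> y \<and> \<not> E x y) P u"
    using mixed path path_rev unfolding mixed_def by auto
  ultimately show False by contradiction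
qed

definition good_center :: "'a \<Rightarrow> bool" where
  "good_center c \<longleftrightarrow> center c \<and> (\<exists>a. anticenter a \<and> E c a)"

definition good_anticenter :: "'a \<Rightarrow> bool" where
  "good_anticenter a \<longleftrightarrow> anticenter a \<and> (\<exists>c. center c \<and> \<not> E c a)"

definition pinned :: "'a \<Rightarrow> bool" where
  "pinned u \<longleftrightarrow> (\<exists>c. good_center c \<and> \<not> E u c) \<or> (\<exists>a. good_anticenter a \<and> E u a)"

lemma pinned_not_mixed_on_path: "u \<in> V \<Longrightarrow> pinned u \<Longrightarrow> \<not> mixed E P u"
  unfolding pinned_def good_center_def good_anticenter_def
  using not_mixed_if_nonadjacent_to_good_center not_mixed_if_adjacent_to_good_anticenter
  by blast

text \<open>The invariant of the sets obtained from \<open>P\<close> by adding mixed vertices one at a time.\<close>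

definition admissible :: "'a set \<Rightarrow> bool" where
  "admissible S \<longleftrightarrow> S \<subseteq> V \<and> P \<subseteq> S \<and> connected_set E S \<and> connected_set (\<lambda>x y. \<not> E x y) S
     \<and> (\<forall>c. good_center c \<longrightarrow> (\<forall>x\<in>S. E c x))
     \<and> (\<forall>a. good_anticenter a \<longrightarrow> a \<notin> S \<and> (\<forall>x\<in>S. \<not> E a x))
     \<and> (\<forall>u\<in>V - S. pinned u \<longrightarrow> \<not> mixed E S u)"

lemma admissible_path: "admissible P"
proof -
  have "\<forall>a. good_anticenter a \<longrightarrow> a \<notin> P \<and> (\<forall>x\<in>P. \<not> E a x)"
    using anticenter_not_in_path unfolding good_anticenter_def anticenter_def by blast
  then show ?thesis
    using path_in_V P_connected P_anticonnected pinned_not_mixed_on_path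
    unfolding admissible_def good_center_def center_def by blast
qed

lemma not_mixed_after_insert_if_nonadjacent_to_good_center:
  assumes S: "admissible S" and w: "w \<in> V - S" "mixed E S w" "\<not> pinned w"
    and u: "u \<in> V - insert w S" "\<not> mixed E S u"
    and c: "good_center c" "\<not> E u c"
  shows "\<not> mixed E (insert w S) u"
proof
  assume mixed: "mixed E (insert w S) u"
  have SV: "S \<subseteq> V" and PS: "P \<subseteq> S" and anticonn: "connected_set (\<lambda>x y. \<not> E x y) S"
    and cS: "\<forall>x\<in>S. E c x" and aS: "\<And>a. good_anticenter a \<Longrightarrow> \<forall>x\<in>S. \<not> E a x"
    using S c(1) unfolding admissible_def by auto
  obtain a where a: "anticenter a" "E c a" and cV: "c \<in> V"
    using c(1) unfolding good_center_def center_def by blast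
  have aV: "a \<in> V" using a(1) unfolding anticenter_def by blast
  have wc: "E w c" using w(3) c(1) unfolding pinned_def by blast
  from u(2) mixed consider "\<forall>x\<in>S. \<not> E u x" "E u w" | "\<forall>x\<in>S. E u x" "\<not> E u w"
    unfolding mixed_def by auto
  then show False
  proof cases
    case 1
    obtain x y where xy: "x \<in> S" "y \<in> S" "E w x" "\<not> E w y" "\<not> E x y"
      using w(2) unfolding mixed_def by (blast elim: connected_set_crossing[OF anticonn])
    then show False
      using no_bull[of w c x u y] 1 SV cS u(1) c(2) wc w(1) cV by (auto simp: adj_sym)
  next
    case 2
    have "center u" using 2 PS u(1) unfolding center_def by auto
    have "\<not> E u a"
    proof
      assume "E u a"
      then have "good_center u" using \<open>center u\<close> a(1) unfolding good_center_def by blast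
      then show False using w(3) 2 u(1) w(1) adj_sym unfolding pinned_def by blast
    qed
    then have "good_anticenter a" using \<open>center u\<close> a(1) unfolding good_anticenter_def by blast
    then have "\<not> E w a" "\<forall>x\<in>S. \<not> E a x" using w(3) aS unfolding pinned_def by blast+
    moreover obtain x where "x \<in> S" "E w x" using w(2) unfolding mixed_def by blast
    ultimately show False
      using no_bull[of c x w a u] 2 \<open>\<not> E u a\<close> SV cS u(1) c(2) wc w(1) cV aV a(2)
      by (auto simp: adj_sym)
  qed
qed

lemma not_mixed_after_insert_if_adjacent_to_good_anticenter:
  assumes S: "admissible S" and w: "w \<in> V - S" "mixed E S w" "\<not> pinned w"
    and u: "u \<in> V - insert w S" "\<not> mixed E S u"
    and a: "good_anticenter a" "E u a"
  shows "\<not> mixed E (insert w S) u"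
proof
  assume mixed: "mixed E (insert w S) u"
  have SV: "S \<subseteq> V" and PS: "P \<subseteq> S" and conn: "connected_set E S"
    and aS: "\<forall>x\<in>S. \<not> E a x" and cS: "\<And>c. good_center c \<Longrightarrow> \<forall>x\<in>S. E c x"
    using S a(1) unfolding admissible_def by auto
  obtain c where c: "center c" "\<not> E c a" and aV: "a \<in> V"
    using a(1) unfolding good_anticenter_def anticenter_def by blast
  have cV: "c \<in> V" using c(1) unfolding center_def by blast
  have wa: "\<not> E w a" using w(3) a(1) unfolding pinned_def by blast
  from u(2) mixed consider "\<forall>x\<in>S. \<not> E u x" "E u w" | "\<forall>x\<in>S. E u x" "\<not> E u w"
    unfolding mixed_def by auto
  then show False
  proof cases
    case 1
    have "anticenter u" using 1 PS u(1) unfolding anticenter_def by auto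
    have "E c u"
    proof (rule ccontr)
      assume "\<not> E c u"
      then have "good_anticenter u" using \<open>anticenter u\<close> c(1) unfolding good_anticenter_def by blast
      then show False using w(3) 1 u(1) w(1) adj_sym unfolding pinned_def by blast
    qed
    then have "good_center c" using \<open>anticenter u\<close> c(1) unfolding good_center_def by blast
    then have "E w c" "\<forall>x\<in>S. E c x" using w(3) cS unfolding pinned_def by blast+
    moreover obtain y where "y \<in> S" "\<not> E w y" using w(2) unfolding mixed_def by blast
    ultimately show False
      using no_bull[of u c w a y] 1 \<open>E c u\<close> SV aS u(1) a(2) wa w(1) cV aV c(2)
      by (auto simp: adj_sym)
  next
    case 2
    obtain x y where xy: "x \<in> S" "y \<in> S" "E w x" "\<not> E w y" "E x y"
      using w(2) unfolding mixed_def by (blast elim: connected_set_crossing[OF conn])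
    then show False
      using no_bull[of x u y w a] 2 SV aS u(1) a(2) wa w(1) aV by (auto simp: adj_sym)
  qed
qed

lemma admissible_insert:
  assumes S: "admissible S" and w: "w \<in> V - S" "mixed E S w"
  shows "admissible (insert w S)"
proof -
  have SV: "S \<subseteq> V" and PS: "P \<subseteq> S" and conn: "connected_set E S"
    and anticonn: "connected_set (\<lambda>x y. \<not> E x y) S"
    and cS: "\<And>c. good_center c \<Longrightarrow> \<forall>x\<in>S. E c x"
    and aS: "\<And>a. good_anticenter a \<Longrightarrow> a \<notin> S \<and> (\<forall>x\<in>S. \<not> E a x)"
    and pinned_S: "\<And>u. u \<in> V - S \<Longrightarrow> pinned u \<Longrightarrow> \<not> mixed E S u"
    using S unfolding admissible_def by auto
  have "\<not> pinned w" using pinned_S w by blast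
  then have wc: "\<And>c. good_center c \<Longrightarrow> E w c" and wa: "\<And>a. good_anticenter a \<Longrightarrow> \<not> E w a"
    unfolding pinned_def by blast+
  obtain x y where x: "x \<in> S" "E w x" and y: "y \<in> S" "\<not> E w y"
    using w(2) unfolding mixed_def by blast
  have "connected_set E (insert w S)"
    using connected_set_insert[OF conn _ x(1)] x SV w(1) adj_sym by blast
  moreover have "connected_set (\<lambda>x y. \<not> E x y) (insert w S)"
    using connected_set_insert[OF anticonn _ y(1)] y SV w(1) adj_sym by blast
  moreover have "\<forall>c. good_center c \<longrightarrow> (\<forall>x\<in>insert w S. E c x)"
    using cS wc w(1) adj_sym unfolding good_center_def center_def by blast
  moreover have "\<forall>a. good_anticenter a \<longrightarrow> a \<notin> insert w S \<and> (\<forall>x\<in>insert w S. \<not> E a x)"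
    using aS wa x w(1) adj_sym unfolding good_anticenter_def anticenter_def by blast
  moreover have "\<forall>u\<in>V - insert w S. pinned u \<longrightarrow> \<not> mixed E (insert w S) u"
    unfolding pinned_def
    using not_mixed_after_insert_if_nonadjacent_to_good_center[OF S w \<open>\<not> pinned w\<close>]
      not_mixed_after_insert_if_adjacent_to_good_anticenter[OF S w \<open>\<not> pinned w\<close>]
      pinned_S unfolding pinned_def by blast
  ultimately show ?thesis
    using SV PS w(1) unfolding admissible_def by auto
qed

lemma homogeneous_set_if_center_and_anticenter:
  assumes "center c" "anticenter a"
  shows "\<exists>X. homogeneous_set V E X"
proof -
  have finV: "finite V" using simple unfolding simple_graph_def by blast
  have "finite {S. admissible S}"
    by (rule finite_subset[of _ "Pow V"]) (use finV in \<open>auto simp: admissible_def\<close>)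
  then obtain H where H: "admissible H"
    and maximal: "\<And>S. admissible S \<Longrightarrow> H \<subseteq> S \<Longrightarrow> H = S"
    using finite_has_maximal2[of "{S. admissible S}" P] admissible_path by auto
  have HV: "H \<subseteq> V" and PH: "P \<subseteq> H" using H unfolding admissible_def by auto
  have not_mixed: "\<not> mixed E H v" if "v \<in> V - H" for v
    using maximal[OF admissible_insert[OF H that]] that by blast
  have "c \<notin> H \<or> a \<notin> H"
  proof (cases "E c a")
    case True
    then have "good_center c" using assms unfolding good_center_def by blast
    then show ?thesis using H assms(1) not_adj_self unfolding admissible_def center_def by blast
  next
    case False
    then have "good_anticenter a" using assms unfolding good_anticenter_def by blast
    then show ?thesis using H unfolding admissible_def by blast
  qed
  then have "H \<subset> V" using HV assms unfolding center_def anticenter_def by blast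
  then have "card H < card V" by (rule psubset_card_mono[OF finV])
  moreover have "1 < card H"
  proof -
    have "p0 \<noteq> p1" using path(1) path_in_V not_adj_self by blast
    then have "card {p0, p1} = 2" by simp
    moreover have "card {p0, p1} \<le> card H"
      using PH finite_subset[OF HV finV] by (intro card_mono) auto
    ultimately show ?thesis by simp
  qed
  ultimately show ?thesis
    using HV not_mixed unfolding homogeneous_set_def mixed_def by blast
qed

end

theorem theorem1p4:
  fixes V :: "'a set" and E :: "'a \<Rightarrow> 'a \<Rightarrow> bool"
  assumes "simple_graph V E"
    and "\<not> contains_induced V E {0..4::nat} C5_adj"
    and "\<not> contains_induced V E {0..4::nat} bull_adj"
    and "contains_anchor V E"
  shows "\<exists>X. homogeneous_set V E X"
proof -
  obtain ac f where fV: "f ` {0..5::nat} \<subseteq> V"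
    and adj: "\<forall>x\<in>{0..5}. \<forall>y\<in>{0..5}. E (f x) (f y) \<longleftrightarrow> anchor_adj ac x y"
    using assms(4) unfolding contains_anchor_def contains_induced_def by blast
  have E: "\<And>i j. i \<le> 5 \<Longrightarrow> j \<le> 5 \<Longrightarrow> E (f i) (f j) \<longleftrightarrow> anchor_adj ac i j"
    and V: "\<And>i. i \<le> 5 \<Longrightarrow> f i \<in> V"
    using adj fV by auto
  interpret bull_C5_free_graph V E
    using assms(1-3) by unfold_locales
  interpret anchored_path V E "f 0" "f 1" "f 2" "f 3"
    by unfold_locales (simp_all add: V E anchor_adj_def doubleton_eq_iff)
  have "center (f 4)" "anticenter (f 5)"
    unfolding center_def anticenter_def by (simp_all add: V E anchor_adj_def doubleton_eq_iff)
  then show ?thesis by (rule homogeneous_set_if_center_and_anticenter)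
qed

end
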